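(* Let $T$ be a pre-truss and $P$ a left-closed normal sub-heap of $T$. If $P$ contains a left ideal of $T$, then $P$ is a left ideal of $T$.
   Context: A heap is a set with a ternary operation $[-,-,-]$ satisfying $[a_1,a_2,[a_3,a_4,a_5]]=[[a_1,a_2,a_3],a_4,a_5]$ and $[a,a,b]=b=[b,a,a]$. A pre-truss is a heap with an associative binary operation (juxtaposition). A normal sub-heap is a non-empty subset $S$ closed under $[-,-,-]$ with $[[a,e,s],a,e]\in S$ for all $a\in T$, $e,s\in S$. A sub-heap $S$ is left-closed if $[ts',ts,s]\in S$ for all $s,s'\in S$, $t\in T$. A left ideal is a normal sub-heap $I$ with $ti\in I$ for all $t\in T$, $i\in I$. *)

theory Defs
  imports Main
begin

definition heap :: "'a set \<Rightarrow> ('a \<Rightarrow> 'a \<Rightarrow> 'a \<Rightarrow> 'a) \<Rightarrow> bool" where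
  "heap T h \<longleftrightarrow>
     (\<forall>a\<in>T. \<forall>b\<in>T. \<forall>c\<in>T. h a b c \<in> T) \<and>
     (\<forall>a1\<in>T. \<forall>a2\<in>T. \<forall>a3\<in>T. \<forall>a4\<in>T. \<forall>a5\<in>T.
        h a1 a2 (h a3 a4 a5) = h (h a1 a2 a3) a4 a5) \<and>
     (\<forall>a\<in>T. \<forall>b\<in>T. h a a b = b \<and> h b a a = b)"

definition pretruss :: "'a set \<Rightarrow> ('a \<Rightarrow> 'a \<Rightarrow> 'a \<Rightarrow> 'a) \<Rightarrow> ('a \<Rightarrow> 'a \<Rightarrow> 'a) \<Rightarrow> bool" where
  "pretruss T h m \<longleftrightarrow> heap T h \<and>
     (\<forall>a\<in>T. \<forall>b\<in>T. m a b \<in> T) \<and>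
     (\<forall>a\<in>T. \<forall>b\<in>T. \<forall>c\<in>T. m (m a b) c = m a (m b c))"

definition sub_heap :: "'a set \<Rightarrow> ('a \<Rightarrow> 'a \<Rightarrow> 'a \<Rightarrow> 'a) \<Rightarrow> 'a set \<Rightarrow> bool" where
  "sub_heap T h S \<longleftrightarrow> S \<noteq> {} \<and> S \<subseteq> T \<and>
     (\<forall>a\<in>S. \<forall>b\<in>S. \<forall>c\<in>S. h a b c \<in> S)"

definition normal_subheap :: "'a set \<Rightarrow> ('a \<Rightarrow> 'a \<Rightarrow> 'a \<Rightarrow> 'a) \<Rightarrow> 'a set \<Rightarrow> bool" where
  "normal_subheap T h S \<longleftrightarrow> sub_heap T h S \<and>
     (\<forall>a\<in>T. \<forall>e\<in>S. \<forall>s\<in>S. h (h a e s) a e \<in> S)"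

definition left_closed :: "'a set \<Rightarrow> ('a \<Rightarrow> 'a \<Rightarrow> 'a \<Rightarrow> 'a) \<Rightarrow> ('a \<Rightarrow> 'a \<Rightarrow> 'a) \<Rightarrow> 'a set \<Rightarrow> bool" where
  "left_closed T h m S \<longleftrightarrow> sub_heap T h S \<and>
     (\<forall>s\<in>S. \<forall>s'\<in>S. \<forall>t\<in>T. h (m t s') (m t s) s \<in> S)"

definition left_ideal :: "'a set \<Rightarrow> ('a \<Rightarrow> 'a \<Rightarrow> 'a \<Rightarrow> 'a) \<Rightarrow> ('a \<Rightarrow> 'a \<Rightarrow> 'a) \<Rightarrow> 'a set \<Rightarrow> bool" where
  "left_ideal T h m I \<longleftrightarrow> normal_subheap T h I \<and> (\<forall>t\<in>T. \<forall>i\<in>I. m t i \<in> I)"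

end

theory Submission
  imports Defs
begin

text \<open>Pick any \<open>i\<close> in the left ideal, so that \<open>ti \<in> P\<close> for every \<open>t\<close>. Left-closedness puts
  \<open>[tp, ti, i]\<close> into \<open>P\<close>, and since \<open>i, ti \<in> P\<close> the sub-heap \<open>P\<close> also contains
  \<open>[[tp, ti, i], i, ti] = tp\<close>.\<close>

lemma heap_assoc:
  assumes "heap T h" and "a \<in> T" "b \<in> T" "c \<in> T" "d \<in> T" "e \<in> T"
  shows "h (h a b c) d e = h a b (h c d e)"
  using assms unfolding heap_def by simp

lemma heap_cancel_right:
  assumes "heap T h" and "a \<in> T" "b \<in> T" "c \<in> T"
  shows "h (h a b c) c b = a"
proof -
  have "h (h a b c) c b = h a b (h c c b)"
    using heap_assoc[OF assms(1)] assms(2-4) by blast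
  also have "\<dots> = a"
    using assms unfolding heap_def by simp
  finally show ?thesis .
qed

lemma left_closed_mult_mem:
  assumes "pretruss T h m" and "left_closed T h m P"
    and "i \<in> P" "t \<in> T" "m t i \<in> P" "p \<in> P"
  shows "m t p \<in> P"
proof -
  have heap: "heap T h" and m_closed: "\<And>a b. \<lbrakk>a \<in> T; b \<in> T\<rbrakk> \<Longrightarrow> m a b \<in> T"
    using assms(1) unfolding pretruss_def by blast+
  have P_sub: "P \<subseteq> T" and P_closed: "\<And>a b c. \<lbrakk>a \<in> P; b \<in> P; c \<in> P\<rbrakk> \<Longrightarrow> h a b c \<in> P"
    using assms(2) unfolding left_closed_def sub_heap_def by blast+
  have shifted: "h (m t p) (m t i) i \<in> P"
    using assms(2-4,6) unfolding left_closed_def by blast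
  have "h (h (m t p) (m t i) i) i (m t i) = m t p"
    using heap_cancel_right[OF heap] m_closed assms(3-6) P_sub by (simp add: subset_iff)
  moreover have "h (h (m t p) (m t i) i) i (m t i) \<in> P"
    using P_closed shifted assms(3,5) by blast
  ultimately show ?thesis by simp
qed

theorem lemma3p19:
  fixes T P :: "'a set" and h :: "'a \<Rightarrow> 'a \<Rightarrow> 'a \<Rightarrow> 'a" and m :: "'a \<Rightarrow> 'a \<Rightarrow> 'a"
  assumes "pretruss T h m"
    and "normal_subheap T h P"
    and "left_closed T h m P"
    and "\<exists>I. left_ideal T h m I \<and> I \<subseteq> P"
  shows "left_ideal T h m P"
proof -
  obtain I where I: "left_ideal T h m I" "I \<subseteq> P"
    using assms(4) by blast
  obtain i where "i \<in> I"
    using I(1) unfolding left_ideal_def normal_subheap_def sub_heap_def by auto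
  have "m t p \<in> P" if "t \<in> T" "p \<in> P" for t p
  proof (rule left_closed_mult_mem[OF assms(1,3) _ that(1) _ that(2)])
    show "i \<in> P"
      using I(2) \<open>i \<in> I\<close> by (rule subsetD)
    show "m t i \<in> P"
      using I \<open>i \<in> I\<close> that(1) unfolding left_ideal_def by auto
  qed
  then show ?thesis
    using assms(2) unfolding left_ideal_def by auto
qed

end
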